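(* Let $F\in Sh^{s,0}_{\Lambda_L}(X)\cap Mod(X)$ be reduced and let $f$ be a local trivialization for $F$. If $f^{-1}$ and $f'^{-1}$ are two choices of right inverses of $f$, then $\epsilon_{(F,f,f^{-1})}=\epsilon_{(F,f,f'^{-1})}$.
   Context: $X=\mathbb{R}^3$ or $S^3$, $k$ a field, $(L,L')$ an $r$-component framed oriented link, $L=K_1\sqcup\dots\sqcup K_r$, framing curves $\ell_s$. Sheaves in $Sh^{s,0}_{\Lambda_L}(X)\cap Mod(X)$ (sheaves of $k$-vector spaces with micro-support at infinity in the unit conormal of $L$, microlocally simple with Morse cone in degree $0$) are equivalent to data $(V,\rho,W_s,\rho_s,T_s)$: $\rho:\pi_1(X\setminus L)\to GL(V)$ the local system on the complement, $W_s$ the stalk on $K_s$ with monodromy $\rho_s$, $T_s:W_s\to V$ the injective restriction map with one-dimensional cokernel, such that the meridian of $K_s$ acts trivially on $T_s(W_s)$ and $\rho(\ell_s)T_s=T_s\rho_s(K_s)$; we view $W_s\subset V$. $F$ is reduced if it admits no nonzero locally constant subsheaf $\mathcal{L}_X$ with $F/\mathcal{L}_X$ a sheaf of the same kind, no nonzero locally constant quotient, and no direct summand $F'$ that is the kernel of a surjection from a nonzero locally constant sheaf onto $i'_*k_{L''}$ for a sublink $L''$. $A_c:V\to V$ denotes trivialized parallel transport along a path $c$ in $X\setminus L$ (with $A_{c_1\cdot c_2}=A_{c_1}A_{c_2}$), $M_t=\rho(m_t)$ for the meridian $m_t$ of $K_t$. A local trivialization is an $r$-tuple of surjective maps $f_s:V\to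 k$ with $f_s|_{W_s}=0$; a right inverse is $f^{-1}=(f_s^{-1})$ with $f_s\circ f_s^{-1}=\mathrm{id}_k$. The augmentation $\epsilon_{(F,f,f^{-1})}$ of the framed cord algebra $\mathrm{Cord}(L)$ is defined on generators by $\epsilon(c_{st})=f_s A_{c_{st}}(\mathrm{id}_V-M_t)f_t^{-1}$ for framed cords $c_{st}$ from $\ell_s$ to $\ell_t$, $\epsilon(\lambda_s)=f_sA_{\ell_s}f_s^{-1}$ ($\ell_s$ the longitude loop), $\epsilon(\mu_s)=1-f_s(\mathrm{id}_V-M_s)f_s^{-1}$. *)

theory Defs
  imports Complex_Main "HOL-Algebra.Group"
begin

text \<open>
  Algebraic model of a sheaf F in Sh^{s,0}_{Lambda_L}(X) cap Mod(X) for an r-component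
  framed link, via the data (V, rho, W_s, rho_s, T_s) of the paper, with T_s the inclusion
  W_s subset V.  V is the whole type 'v, a vector space over the field 'k with scalar
  multiplication sc.  G is the fundamental group of X minus L, m s and l s are the meridian
  and the framing curve of the component K_s (components indexed by s < r).
  Framed cords are elements of an abstract type 'c, with source and target components
  cs c and ct c, and A c is the trivialized parallel transport along c.
\<close>

definition codim_one :: "('k::field \<Rightarrow> 'v::ab_group_add \<Rightarrow> 'v) \<Rightarrow> 'v set \<Rightarrow> bool" where
  "codim_one sc W \<longleftrightarrow> module.subspace sc W \<and>
     (\<exists>v. v \<notin> W \<and> (\<forall>x. \<exists>a. x - sc a v \<in> W))"

definition sheaf_data ::
  "('k::field \<Rightarrow> 'v::ab_group_add \<Rightarrow> 'v) \<Rightarrow> nat \<Rightarrow> ('g, 'b) monoid_scheme \<Rightarrow>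
   ('g \<Rightarrow> 'v \<Rightarrow> 'v) \<Rightarrow> (nat \<Rightarrow> 'g) \<Rightarrow> (nat \<Rightarrow> 'g) \<Rightarrow>
   (nat \<Rightarrow> 'v set) \<Rightarrow> (nat \<Rightarrow> 'v \<Rightarrow> 'v) \<Rightarrow> bool" where
  "sheaf_data sc r G rho m l W rhos \<longleftrightarrow>
     vector_space sc \<and> group G \<and>
     (\<forall>x\<in>carrier G. Vector_Spaces.linear sc sc (rho x)) \<and>
     (\<forall>x\<in>carrier G. \<forall>y\<in>carrier G. rho (x \<otimes>\<^bsub>G\<^esub> y) = rho x \<circ> rho y) \<and>
     rho \<one>\<^bsub>G\<^esub> = id \<and>
     (\<forall>s<r. m s \<in> carrier G \<and> l s \<in> carrier G) \<and>
     (\<forall>s<r. codim_one sc (W s)) \<and>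
     (\<forall>s<r. bij_betw (rhos s) (W s) (W s) \<and>
            (\<forall>w\<in>W s. rho (l s) w = rhos s w)) \<and>
     (\<forall>s<r. \<forall>w\<in>W s. rho (m s) w = w)"

text \<open>Reducedness, translated into the data.  Locally constant sheaves on X (R^3 or S^3,
  simply connected) are constant, i.e. given by a vector space with trivial monodromy.\<close>

definition reduced ::
  "('k::field \<Rightarrow> 'v::ab_group_add \<Rightarrow> 'v) \<Rightarrow> nat \<Rightarrow> ('g, 'b) monoid_scheme \<Rightarrow>
   ('g \<Rightarrow> 'v \<Rightarrow> 'v) \<Rightarrow> (nat \<Rightarrow> 'v set) \<Rightarrow> bool" where
  "reduced sc r G rho W \<longleftrightarrow>
     \<comment> \<open>no nonzero locally constant subsheaf (quotient is then automatically of the same kind)\<close>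
     \<not> (\<exists>U. module.subspace sc U \<and> U \<noteq> {0} \<and> (\<forall>s<r. U \<subseteq> W s) \<and>
            (\<forall>g\<in>carrier G. \<forall>u\<in>U. rho g u = u)) \<and>
     \<comment> \<open>no nonzero locally constant quotient (surjection F onto a constant sheaf)\<close>
     \<not> (\<exists>\<phi>. Vector_Spaces.linear sc sc \<phi> \<and> range \<phi> \<noteq> {0} \<and>
            (\<forall>g\<in>carrier G. \<phi> \<circ> rho g = \<phi>) \<and> (\<forall>s<r. \<phi> ` W s = range \<phi>)) \<and>
     \<comment> \<open>no direct summand F' = kernel of a surjection from a nonzero constant sheaf onto
        the skyscraper-type sheaf of a sublink: F = F' + F'' with F' having stalk V1 off L,
        trivial monodromy, and stalk W s inter V1 (of codimension at most one in V1) on K_s\<close>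
     \<not> (\<exists>V1 V2. module.subspace sc V1 \<and> module.subspace sc V2 \<and> V1 \<noteq> {0} \<and>
            V1 \<inter> V2 = {0} \<and> (\<forall>x. \<exists>a\<in>V1. \<exists>b\<in>V2. x = a + b) \<and>
            (\<forall>g\<in>carrier G. (\<forall>u\<in>V1. rho g u = u) \<and> rho g ` V2 \<subseteq> V2) \<and>
            (\<forall>s<r. \<forall>w\<in>W s. \<exists>a\<in>W s \<inter> V1. \<exists>b\<in>W s \<inter> V2. w = a + b))"

definition local_triv ::
  "('k::field \<Rightarrow> 'v::ab_group_add \<Rightarrow> 'v) \<Rightarrow> nat \<Rightarrow> (nat \<Rightarrow> 'v set) \<Rightarrow> (nat \<Rightarrow> 'v \<Rightarrow> 'k) \<Rightarrow> bool" where
  "local_triv sc r W f \<longleftrightarrow>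
     (\<forall>s<r. Vector_Spaces.linear sc (*) (f s) \<and> surj (f s) \<and> (\<forall>w\<in>W s. f s w = 0))"

definition right_inv ::
  "('k::field \<Rightarrow> 'v::ab_group_add \<Rightarrow> 'v) \<Rightarrow> nat \<Rightarrow> (nat \<Rightarrow> 'v \<Rightarrow> 'k) \<Rightarrow> (nat \<Rightarrow> 'k \<Rightarrow> 'v) \<Rightarrow> bool" where
  "right_inv sc r f finv \<longleftrightarrow>
     (\<forall>s<r. Vector_Spaces.linear (*) sc (finv s) \<and> f s \<circ> finv s = id)"

datatype 'c cord_gen = Cord 'c | Lam nat | Mu nat

text \<open>A linear map k \<rightarrow> k is identified with the scalar
  it multiplies by, i.e. its value at 1.  The longitude transport A_{l_s} is rho (l s),
  the meridian monodromy M_t is rho (m t).\<close>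
fun aug ::
  "('g \<Rightarrow> 'v::ab_group_add \<Rightarrow> 'v) \<Rightarrow> (nat \<Rightarrow> 'g) \<Rightarrow> (nat \<Rightarrow> 'g) \<Rightarrow>
   ('c \<Rightarrow> nat) \<Rightarrow> ('c \<Rightarrow> nat) \<Rightarrow> ('c \<Rightarrow> 'v \<Rightarrow> 'v) \<Rightarrow>
   (nat \<Rightarrow> 'v \<Rightarrow> 'k::field) \<Rightarrow> (nat \<Rightarrow> 'k \<Rightarrow> 'v) \<Rightarrow> 'c cord_gen \<Rightarrow> 'k" where
  "aug rho m l cs ct A f finv (Cord c) =
     f (cs c) (A c (finv (ct c) 1 - rho (m (ct c)) (finv (ct c) 1)))"
| "aug rho m l cs ct A f finv (Lam s) = f s (rho (l s) (finv s 1))"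
| "aug rho m l cs ct A f finv (Mu s) = 1 - f s (finv s 1 - rho (m s) (finv s 1))"

end

theory Submission
  imports Defs
begin

text \<open>
  Two right inverses of f_s send 1 to vectors with the same image under f_s, so their
  difference lies in the kernel of f_s, which is W_s because W_s has codimension one and
  f_s vanishes on it.  Every generator's value is insensitive to such a change: on W_s the
  meridian acts trivially, so id - M_t kills the difference (cords and mu), and the
  longitude preserves W_s, on which f_s vanishes (lambda).
\<close>

lemma codim_one_ker_subset:
  fixes sc :: "'k::field \<Rightarrow> 'v::ab_group_add \<Rightarrow> 'v" and g :: "'v \<Rightarrow> 'k"
  assumes W: "codim_one sc W" and g: "Vector_Spaces.linear sc (*) g"
    and nonzero: "g y \<noteq> 0" and vanish: "\<forall>w\<in>W. g w = 0" and x: "g x = 0"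
  shows "x \<in> W"
proof -
  interpret g: Vector_Spaces.linear sc "(*)" g using g .
  obtain v where "v \<notin> W" and decomp: "\<forall>x. \<exists>a. x - sc a v \<in> W"
    using W unfolding codim_one_def by blast
  have g_decomp: "g z = a * g v" if "z - sc a v \<in> W" for z a
  proof -
    have "g (z - sc a v) = 0" using vanish that by blast
    then show ?thesis by (simp add: g.diff g.scale)
  qed
  have "g v \<noteq> 0"
    using decomp g_decomp nonzero by (metis mult_zero_right)
  obtain a where a: "x - sc a v \<in> W" using decomp by blast
  with g_decomp x \<open>g v \<noteq> 0\<close> have "a = 0" by force
  with a show ?thesis by simp
qed

lemma right_inv_diff_mem:
  assumes F: "sheaf_data sc r G rho m l W rhos" and triv: "local_triv sc r W f"
    and inv1: "right_inv sc r f finv" and inv2: "right_inv sc r f finv'" and s: "s < r"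
  shows "finv s 1 - finv' s 1 \<in> W s"
proof -
  have lin: "Vector_Spaces.linear sc (*) (f s)" and vanish: "\<forall>w\<in>W s. f s w = 0"
    using triv s by (auto simp: local_triv_def)
  interpret f: Vector_Spaces.linear sc "(*)" "f s" using lin .
  have one: "f s (finv s 1) = 1" "f s (finv' s 1) = 1"
    using inv1 inv2 s unfolding right_inv_def by (metis comp_apply id_apply)+
  show ?thesis
  proof (rule codim_one_ker_subset[OF _ lin _ vanish])
    show "codim_one sc (W s)" using F s by (simp add: sheaf_data_def)
    show "f s (finv s 1) \<noteq> 0" using one by simp
    show "f s (finv s 1 - finv' s 1) = 0" using one by (simp add: f.diff)
  qed
qed

lemma id_minus_eq_if_fixed:
  assumes "Vector_Spaces.linear sc sc M" and "M (v1 - v2) = v1 - v2"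
  shows "v1 - M v1 = v2 - M v2"
proof -
  interpret M: Vector_Spaces.linear sc sc M by fact
  have "M v1 - M v2 = v1 - v2" using assms(2) by (simp add: M.diff)
  then show ?thesis by (simp add: algebra_simps)
qed

lemma meridian_id_minus_eq:
  assumes F: "sheaf_data sc r G rho m l W rhos" and t: "t < r" and d: "v1 - v2 \<in> W t"
  shows "v1 - rho (m t) v1 = v2 - rho (m t) v2"
  using F t d by (intro id_minus_eq_if_fixed) (auto simp: sheaf_data_def)

lemma longitude_maps_W:
  assumes F: "sheaf_data sc r G rho m l W rhos" and s: "s < r" and w: "w \<in> W s"
  shows "rho (l s) w \<in> W s"
proof -
  have "rho (l s) w = rhos s w" and "rhos s ` W s = W s"
    using F s w by (auto simp: sheaf_data_def bij_betw_def)
  with w show ?thesis by blast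
qed

lemma longitude_aug_eq:
  assumes F: "sheaf_data sc r G rho m l W rhos" and triv: "local_triv sc r W f"
    and s: "s < r" and d: "v1 - v2 \<in> W s"
  shows "f s (rho (l s) v1) = f s (rho (l s) v2)"
proof -
  interpret L: Vector_Spaces.linear sc sc "rho (l s)" using F s by (simp add: sheaf_data_def)
  have lin: "Vector_Spaces.linear sc (*) (f s)" and vanish: "\<forall>w\<in>W s. f s w = 0"
    using triv s by (auto simp: local_triv_def)
  interpret f: Vector_Spaces.linear sc "(*)" "f s" using lin .
  have "f s (rho (l s) (v1 - v2)) = 0"
    using vanish longitude_maps_W[OF F s d] by blast
  then show ?thesis by (simp add: L.diff f.diff)
qed

theorem proposition4p5:
  fixes sc :: "'k::field \<Rightarrow> 'v::ab_group_add \<Rightarrow> 'v"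
    and r :: nat
    and G :: "('g, 'b) monoid_scheme"
    and rho :: "'g \<Rightarrow> 'v \<Rightarrow> 'v"
    and m l :: "nat \<Rightarrow> 'g"
    and W :: "nat \<Rightarrow> 'v set"
    and rhos :: "nat \<Rightarrow> 'v \<Rightarrow> 'v"
    and cs ct :: "'c \<Rightarrow> nat"
    and A :: "'c \<Rightarrow> 'v \<Rightarrow> 'v"
    and f :: "nat \<Rightarrow> 'v \<Rightarrow> 'k"
    and finv finv' :: "nat \<Rightarrow> 'k \<Rightarrow> 'v"
  assumes F: "sheaf_data sc r G rho m l W rhos"
    and red: "reduced sc r G rho W"
    and cords: "\<forall>c. cs c < r \<and> ct c < r \<and> Vector_Spaces.linear sc sc (A c) \<and> bij (A c)"
    and triv: "local_triv sc r W f"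
    and inv1: "right_inv sc r f finv"
    and inv2: "right_inv sc r f finv'"
  shows "\<forall>x. (case x of Lam s \<Rightarrow> s < r | Mu s \<Rightarrow> s < r | Cord c \<Rightarrow> True) \<longrightarrow>
           aug rho m l cs ct A f finv x = aug rho m l cs ct A f finv' x"
proof (intro allI impI)
  fix x :: "'c cord_gen"
  assume x: "case x of Lam s \<Rightarrow> s < r | Mu s \<Rightarrow> s < r | Cord c \<Rightarrow> True"
  note diff_mem = right_inv_diff_mem[OF F triv inv1 inv2]
  show "aug rho m l cs ct A f finv x = aug rho m l cs ct A f finv' x"
  proof (cases x)
    case (Cord c)
    have "ct c < r" using cords by blast
    with Cord show ?thesis by (simp add: meridian_id_minus_eq[OF F _ diff_mem])
  next
    case (Mu s)
    with x show ?thesis by (simp add: meridian_id_minus_eq[OF F _ diff_mem])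
  next
    case (Lam s)
    with x show ?thesis by (simp add: longitude_aug_eq[OF F triv _ diff_mem])
  qed
qed

end
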